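(* Let $0<\alpha<1$, $T>1$, and $u\in C^1[0,T]$. Then for $t\in[0,T-1]$, $$I^{\alpha}_{0^+}\left(\int_{t}^{t+1}D^{\alpha}_{0^+}u(s)\,ds\right)=\int_{t}^{t+1}u(s)\,ds-\int_{0}^{1}u(s)\,ds+\frac{1}{\Gamma(2-\alpha)}I^{\alpha}_{0^+}\left(\int_{0}^{1}\left[(t+1-r)^{1-\alpha}-t^{1-\alpha}\right]u'(r)\,dr\right),$$ where on both sides $I^\alpha_{0^+}$ acts on the displayed expression regarded as a function of $t$.
   Context: For $0<\alpha<1$, the Caputo fractional derivative is $D^{\alpha}_{0^+}u(t)=\frac{1}{\Gamma(1-\alpha)}\int_0^t (t-s)^{-\alpha}u'(s)\,ds$ and the Riemann–Liouville fractional integral is $I^{\alpha}_{0^+}g(t)=\frac{1}{\Gamma(\alpha)}\int_0^t (t-s)^{\alpha-1}g(s)\,ds$. *)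

theory Defs
  imports "HOL-Analysis.Analysis"
begin

definition C1_on :: "real \<Rightarrow> real \<Rightarrow> (real \<Rightarrow> real) \<Rightarrow> bool" where
  "C1_on a b u \<longleftrightarrow> (\<exists>u'. (\<forall>x\<in>{a..b}. (u has_real_derivative u' x) (at x within {a..b}))
                          \<and> continuous_on {a..b} u')"

definition RL_integral :: "real \<Rightarrow> (real \<Rightarrow> real) \<Rightarrow> real \<Rightarrow> real" where
  "RL_integral \<alpha> g t = (1 / Gamma \<alpha>) * integral {0..t} (\<lambda>s. (t - s) powr (\<alpha> - 1) * g s)"

definition caputo_deriv :: "real \<Rightarrow> (real \<Rightarrow> real) \<Rightarrow> real \<Rightarrow> real" where
  "caputo_deriv \<alpha> u t = (1 / Gamma (1 - \<alpha>)) * integral {0..t} (\<lambda>s. (t - s) powr (- \<alpha>) * deriv u s)"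

end

theory Submission
  imports Defs
begin

text \<open>
  On [0,T] the Caputo derivative is I^(1-\<alpha>) u', so the semigroup law I^a I^b = I^(a+b)
  (Fubini, with a Beta integral as inner integral) gives \<integral>_0^y D^\<alpha> u = I^(2-\<alpha>) u' (y).
  Splitting the kernel integral defining I^(2-\<alpha>) u' (\<tau>+1) at r = 1 and shifting the part over
  [1,\<tau>+1] back to [0,\<tau>] yields
    \<integral>_\<tau>^(\<tau>+1) D^\<alpha> u = (G \<tau> + (u 1 - u 0) \<tau>^(1-\<alpha>)) / \<Gamma>(2-\<alpha>) + I^(2-\<alpha>) h (\<tau>),
  where h r = u'(r+1) - u' r and G is the integral inside the last term of the claim.
  Applying I^\<alpha>, the power rule turns \<tau>^(1-\<alpha>) into \<Gamma>(2-\<alpha>) t, the semigroup law turns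
  I^(2-\<alpha>) h into I^2 h (t) = \<integral>_0^t (t-r) h r dr, and integration by parts evaluates the latter
  to \<integral>_t^(t+1) u - \<integral>_0^1 u - t (u 1 - u 0); the two terms in t cancel.
\<close>

lemma has_integral_powr_kernel:
  fixes c x :: real
  assumes "c > 0" "x \<ge> 0"
  shows "((\<lambda>s. (x - s) powr (c - 1)) has_integral x powr c / c) {0..x}"
proof -
  have "((\<lambda>s. s powr (c - 1)) has_integral x powr c / c) (cbox 0 x)"
    using has_integral_powr_from_0[of "c - 1" x] assms by simp
  from has_integral_affinity[OF this, of "-1" x]
  have "((\<lambda>s. (x - s) powr (c - 1)) has_integral x powr c / c) ((\<lambda>s. x - s) ` {0..x})"
    by simp
  moreover have "(\<lambda>s. x - s) ` {0..x} = {0..x}"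
    using assms by (auto simp: image_iff intro!: bexI[where x="x - _"])
  ultimately show ?thesis by simp
qed

lemma has_integral_Beta_shifted:
  fixes a b r x :: real
  assumes "a > 0" "b > 0" "r < x"
  shows "((\<lambda>s. (x - s) powr (a - 1) * (s - r) powr (b - 1)) has_integral
            Beta a b * (x - r) powr (a + b - 1)) {r..x}"
proof -
  define d where "d = x - r"
  have d: "d > 0" using assms by (simp add: d_def)
  have "((\<lambda>t. t powr (b - 1) * (1 - t) powr (a - 1)) has_integral Beta a b) (cbox 0 1)"
    using has_integral_Beta_real[of b a] assms by (simp add: Beta_commute)
  from has_integral_affinity'[OF this, of "1 / d" "- r / d"] d
  have "((\<lambda>s. ((s - r) / d) powr (b - 1) * (1 - (s - r) / d) powr (a - 1))
      has_integral d * Beta a b) {r..r + d}"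
    by (simp add: diff_divide_distrib add_divide_distrib algebra_simps)
  then have I: "((\<lambda>s. ((s - r) / d) powr (b - 1) * (1 - (s - r) / d) powr (a - 1))
      has_integral d * Beta a b) {r..x}"
    by (simp add: d_def)
  have scale: "(x - s) powr (a - 1) * (s - r) powr (b - 1)
      = d powr (a + b - 2) * (((s - r) / d) powr (b - 1) * (1 - (s - r) / d) powr (a - 1))"
    if "s \<in> {r..x}" for s
  proof -
    have "1 - (s - r) / d = (x - s) / d"
      using d by (simp add: d_def field_simps)
    then show ?thesis
      using that d by (simp add: powr_divide powr_add[symmetric] field_simps)
  qed
  have "d powr (a + b - 2) * d = d powr (a + b - 1)"
    using d powr_add[of d "a + b - 2" 1] by simp
  then have "d powr (a + b - 2) * (d * Beta a b) = Beta a b * (x - r) powr (a + b - 1)"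
    by (metis d_def mult.assoc mult.commute)
  with has_integral_mult_right[OF I, of "d powr (a + b - 2)"] scale show ?thesis
    by (metis (no_types, lifting) has_integral_cong)
qed

lemma lborel_integral_has_integral_nonneg:
  fixes f :: "real \<Rightarrow> real"
  assumes "\<And>s. s \<in> S \<Longrightarrow> 0 \<le> f s" "(f has_integral I) S"
    and "(\<lambda>s. indicator S s * f s) \<in> borel_measurable borel"
  shows "integrable lborel (\<lambda>s. indicator S s * f s)"
    and "(\<integral>s. indicator S s * f s \<partial>lborel) = I"
proof -
  have "0 \<le> I" using has_integral_nonneg assms(1,2) by metis
  moreover have "(\<integral>\<^sup>+s. ennreal (indicator S s * f s) \<partial>lborel) = ennreal I"
    using nn_integral_has_integral_lebesgue[OF assms(1,2)] by simp
  moreover have "AE s in lborel. 0 \<le> indicator S s * f s"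
    using assms(1) by (simp add: indicator_def)
  ultimately show "integrable lborel (\<lambda>s. indicator S s * f s)"
    and "(\<integral>s. indicator S s * f s \<partial>lborel) = I"
    using nn_integral_eq_integrable[of "\<lambda>s. indicator S s * f s" lborel I] assms(3) by auto
qed

lemma set_integrable_powr_kernel_mult:
  fixes c x :: real and g :: "real \<Rightarrow> real"
  assumes c: "c > 0" and g: "continuous_on {0..x} g"
  shows "set_integrable lborel {0..x} (\<lambda>r. (x - r) powr (c - 1) * g r)"
proof (cases "x \<ge> 0")
  case True
  have kernel_meas: "(\<lambda>r. indicator {0..x} r * (x - r) powr (c - 1)) \<in> borel_measurable borel"
    by measurable
  have "integrable lborel (\<lambda>r. indicator {0..x} r * (x - r) powr (c - 1))"
    using lborel_integral_has_integral_nonneg(1)[OF _ has_integral_powr_kernel[OF c True] kernel_meas]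
    by simp
  then have kernel: "set_integrable lborel {0..x} (\<lambda>r. (x - r) powr (c - 1))"
    by (simp add: set_integrable_def)
  obtain M where M: "\<And>r. r \<in> {0..x} \<Longrightarrow> \<bar>g r\<bar> \<le> M"
    using compact_imp_bounded[OF compact_continuous_image[OF g]] by (auto simp: bounded_iff) (metis atLeastAtMost_iff)
  have g_meas: "(\<lambda>r. indicator {0..x} r * g r) \<in> borel_measurable borel"
    using borel_measurable_continuous_on_indicator[OF _ g] by simp
  have "(\<lambda>r. indicator {0..x} r * ((x - r) powr (c - 1) * g r))
      = (\<lambda>r. (indicator {0..x} r * (x - r) powr (c - 1)) * (indicator {0..x} r * g r))"
    by (auto simp: indicator_def)
  then have "set_borel_measurable lborel {0..x} (\<lambda>r. (x - r) powr (c - 1) * g r)"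
    using kernel_meas g_meas by (simp add: set_borel_measurable_def)
  moreover have "AE r in lborel. r \<in> {0..x} \<longrightarrow>
      norm ((x - r) powr (c - 1) * g r) \<le> norm (M * (x - r) powr (c - 1))"
  proof (intro AE_I2 impI)
    fix r assume "r \<in> {0..x}"
    then have "\<bar>g r\<bar> \<le> \<bar>M\<bar>" using M by force
    then show "norm ((x - r) powr (c - 1) * g r) \<le> norm (M * (x - r) powr (c - 1))"
      by (simp add: abs_mult mult.commute mult_right_mono)
  qed
  ultimately show ?thesis
    using set_integrable_bound[OF set_integrable_mult_right[OF kernel]] by blast
qed simp

lemma set_lebesgue_integral_powr_kernel_mult:
  fixes c x :: real and g :: "real \<Rightarrow> real"
  assumes "c > 0" "continuous_on {0..x} g"
  shows "(LINT r:{0..x}|lborel. (x - r) powr (c - 1) * g r) = integral {0..x} (\<lambda>r. (x - r) powr (c - 1) * g r)"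
  using set_borel_integral_eq_integral(2)[OF set_integrable_powr_kernel_mult[OF assms]] .

definition Beta_kernel :: "real \<Rightarrow> real \<Rightarrow> real \<Rightarrow> real \<Rightarrow> real \<Rightarrow> real" where
  "Beta_kernel a b x r s = indicator {r..x} s * ((x - s) powr (a - 1) * (s - r) powr (b - 1))"

lemma Beta_kernel_nonneg: "Beta_kernel a b x r s \<ge> 0"
  by (simp add: Beta_kernel_def)

lemma Beta_kernel_section:
  fixes a b r x :: real
  assumes "a > 0" "b > 0" "r \<le> x"
  shows "integrable lborel (Beta_kernel a b x r)"
    and "(\<integral>s. Beta_kernel a b x r s \<partial>lborel) = Beta a b * (x - r) powr (a + b - 1)"
proof -
  have kernel: "Beta_kernel a b x r = (\<lambda>s. indicator {r..x} s * ((x - s) powr (a - 1) * (s - r) powr (b - 1)))"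
    by (simp add: fun_eq_iff Beta_kernel_def)
  have "integrable lborel (Beta_kernel a b x r)
      \<and> (\<integral>s. Beta_kernel a b x r s \<partial>lborel) = Beta a b * (x - r) powr (a + b - 1)"
  proof (cases "r < x")
    case True
    have "(\<lambda>s. indicator {r..x} s * ((x - s) powr (a - 1) * (s - r) powr (b - 1))) \<in> borel_measurable borel"
      by measurable
    note integral = lborel_integral_has_integral_nonneg[OF _ has_integral_Beta_shifted[OF assms(1,2) True] this]
    show ?thesis
      unfolding kernel using integral by simp
  next
    case False
    then have "r = x" using assms(3) by simp
    then have "Beta_kernel a b x r = (\<lambda>s. 0)"
      unfolding kernel by (auto simp: indicator_def)
    then show ?thesis
      using \<open>r = x\<close> by simp
  qed
  then show "integrable lborel (Beta_kernel a b x r)"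
    and "(\<integral>s. Beta_kernel a b x r s \<partial>lborel) = Beta a b * (x - r) powr (a + b - 1)"
    by auto
qed

lemma integrable_Beta_kernel_product:
  fixes a b x :: real and g :: "real \<Rightarrow> real"
  assumes a: "a > 0" and b: "b > 0" and g: "continuous_on {0..x} g"
  shows "integrable (lborel \<Otimes>\<^sub>M lborel) (\<lambda>(r, s). indicator {0..x} r * g r * Beta_kernel a b x r s)"
proof -
  have [measurable]: "(\<lambda>r. indicator {0..x} r * g r) \<in> borel_measurable borel"
    using borel_measurable_continuous_on_indicator[OF _ g] by simp
  have "(\<lambda>(r, s). indicator {0..x} r * g r * Beta_kernel a b x r s)
      = (\<lambda>p. indicator {0..x} (fst p) * g (fst p) * ((if fst p \<le> snd p \<and> snd p \<le> x then 1 else 0)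
          * ((x - snd p) powr (a - 1) * (snd p - fst p) powr (b - 1))))"
    by (auto simp: Beta_kernel_def indicator_def fun_eq_iff)
  also have "\<dots> \<in> borel_measurable (borel \<Otimes>\<^sub>M borel)"
    by measurable
  finally have meas: "(\<lambda>(r, s). indicator {0..x} r * g r * Beta_kernel a b x r s)
      \<in> borel_measurable (lborel \<Otimes>\<^sub>M lborel)"
    by (simp cong: measurable_cong_sets)
  have r_section: "integrable lborel (\<lambda>s. indicator {0..x} r * g r * Beta_kernel a b x r s)
      \<and> (\<integral>s. norm (indicator {0..x} r * g r * Beta_kernel a b x r s) \<partial>lborel)
         = Beta a b * (indicator {0..x} r * \<bar>g r\<bar> * (x - r) powr (a + b - 1))" for r
  proof (cases "r \<in> {0..x}")
    case True
    have "norm (indicator {0..x} r * g r * Beta_kernel a b x r s) = \<bar>g r\<bar> * Beta_kernel a b x r s" for s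
      using True by (simp add: abs_mult abs_of_nonneg[OF Beta_kernel_nonneg])
    then show ?thesis
      using Beta_kernel_section[OF a b, of r x] True by simp
  qed simp
  have "set_integrable lborel {0..x} (\<lambda>r. (x - r) powr (a + b - 1) * \<bar>g r\<bar>)"
    using set_integrable_powr_kernel_mult[of "a + b" x "\<lambda>r. \<bar>g r\<bar>"] a b g
    by (simp add: continuous_on_rabs)
  then have "integrable lborel
      (\<lambda>r. \<integral>s. norm (indicator {0..x} r * g r * Beta_kernel a b x r s) \<partial>lborel)"
    unfolding r_section[THEN conjunct2] by (simp add: set_integrable_def mult_ac)
  with meas r_section show ?thesis
    by (intro lborel_pair.Fubini_integrable) simp_all
qed

lemma iterated_powr_kernel_integral:
  fixes a b x :: real and g :: "real \<Rightarrow> real"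
  assumes a: "a > 0" and b: "b > 0" and g: "continuous_on {0..x} g"
  shows "(\<lambda>s. (x - s) powr (a - 1) * integral {0..s} (\<lambda>r. (s - r) powr (b - 1) * g r)) integrable_on {0..x}"
    and "integral {0..x} (\<lambda>s. (x - s) powr (a - 1) * integral {0..s} (\<lambda>r. (s - r) powr (b - 1) * g r))
         = Beta a b * integral {0..x} (\<lambda>r. (x - r) powr (a + b - 1) * g r)"
proof -
  define F where "F = (\<lambda>r s. indicator {0..x} r * g r * Beta_kernel a b x r s)"
  have F_int: "integrable (lborel \<Otimes>\<^sub>M lborel) (\<lambda>(r, s). F r s)"
    unfolding F_def by (rule integrable_Beta_kernel_product[OF a b g])
  have s_section: "(\<integral>r. F r s \<partial>lborel)
      = indicator {0..x} s * ((x - s) powr (a - 1) * integral {0..s} (\<lambda>r. (s - r) powr (b - 1) * g r))" for s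
  proof (cases "s \<in> {0..x}")
    case True
    have "F r s = (x - s) powr (a - 1) * (indicator {0..s} r * ((s - r) powr (b - 1) * g r))" for r
      using True by (auto simp: F_def Beta_kernel_def indicator_def)
    moreover have "continuous_on {0..s} g"
      using True by (auto intro: continuous_on_subset[OF g])
    ultimately show ?thesis
      using True set_lebesgue_integral_powr_kernel_mult[OF b]
      by (simp add: set_lebesgue_integral_def)
  next
    case False
    then have "(\<lambda>r. F r s) = (\<lambda>r. 0)"
      by (auto simp: F_def Beta_kernel_def indicator_def)
    then show ?thesis
      using False by simp
  qed
  have r_section: "(\<integral>s. F r s \<partial>lborel) = Beta a b * (indicator {0..x} r * ((x - r) powr (a + b - 1) * g r))" for r
    using Beta_kernel_section(2)[OF a b, of r x] by (cases "r \<in> {0..x}") (simp_all add: F_def)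
  have "set_integrable lborel {0..x}
      (\<lambda>s. (x - s) powr (a - 1) * integral {0..s} (\<lambda>r. (s - r) powr (b - 1) * g r))"
    using lborel_pair.integrable_snd[OF F_int] s_section by (simp add: set_integrable_def)
  note L = set_borel_integral_eq_integral[OF this]
  then show "(\<lambda>s. (x - s) powr (a - 1) * integral {0..s} (\<lambda>r. (s - r) powr (b - 1) * g r)) integrable_on {0..x}"
    by blast
  have "integral {0..x} (\<lambda>s. (x - s) powr (a - 1) * integral {0..s} (\<lambda>r. (s - r) powr (b - 1) * g r))
      = (\<integral>s. (\<integral>r. F r s \<partial>lborel) \<partial>lborel)"
    using L(2) s_section by (simp add: set_lebesgue_integral_def)
  also have "\<dots> = (\<integral>r. (\<integral>s. F r s \<partial>lborel) \<partial>lborel)"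
    using lborel_pair.Fubini_integral[OF F_int] by simp
  also have "\<dots> = Beta a b * (LINT r:{0..x}|lborel. (x - r) powr (a + b - 1) * g r)"
    unfolding r_section by (simp add: set_lebesgue_integral_def)
  also have "\<dots> = Beta a b * integral {0..x} (\<lambda>r. (x - r) powr (a + b - 1) * g r)"
    using set_lebesgue_integral_powr_kernel_mult[of "a + b" x g] a b g by simp
  finally show "integral {0..x} (\<lambda>s. (x - s) powr (a - 1) * integral {0..s} (\<lambda>r. (s - r) powr (b - 1) * g r))
         = Beta a b * integral {0..x} (\<lambda>r. (x - r) powr (a + b - 1) * g r)" .
qed

definition RL_integrable :: "real \<Rightarrow> (real \<Rightarrow> real) \<Rightarrow> real \<Rightarrow> bool" where
  "RL_integrable a f x \<longleftrightarrow> (\<lambda>s. (x - s) powr (a - 1) * f s) integrable_on {0..x}"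

lemma RL_integrable_continuous:
  "a > 0 \<Longrightarrow> continuous_on {0..x} f \<Longrightarrow> RL_integrable a f x"
  unfolding RL_integrable_def
  using set_borel_integral_eq_integral(1)[OF set_integrable_powr_kernel_mult] .

lemma RL_integrable_add:
  "RL_integrable a f x \<Longrightarrow> RL_integrable a g x \<Longrightarrow> RL_integrable a (\<lambda>s. f s + g s) x"
  unfolding RL_integrable_def by (simp add: distrib_left integrable_add)

lemma RL_integrable_cmult: "RL_integrable a f x \<Longrightarrow> RL_integrable a (\<lambda>s. c * f s) x"
  unfolding RL_integrable_def by (drule integrable_on_cmult_left[where c=c]) (simp add: mult.left_commute)

lemma RL_integrable_one_iff: "RL_integrable 1 f x \<longleftrightarrow> f integrable_on {0..x}"
  unfolding RL_integrable_def by (rule integrable_spike_finite_eq[of "{x}"]) auto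

lemma RL_integral_cong:
  "(\<And>s. s \<in> {0..x} \<Longrightarrow> f s = g s) \<Longrightarrow> RL_integral a f x = RL_integral a g x"
  unfolding RL_integral_def by (metis (no_types, lifting) integral_cong)

lemma RL_integral_cmult: "RL_integral a (\<lambda>s. c * f s) x = c * RL_integral a f x"
  unfolding RL_integral_def by (simp add: mult.left_commute)

lemma RL_integral_divide: "RL_integral a (\<lambda>s. f s / c) x = RL_integral a f x / c"
  unfolding RL_integral_def by simp

lemma RL_integral_add:
  "RL_integrable a f x \<Longrightarrow> RL_integrable a g x
    \<Longrightarrow> RL_integral a (\<lambda>s. f s + g s) x = RL_integral a f x + RL_integral a g x"
  unfolding RL_integrable_def RL_integral_def by (simp add: distrib_left integral_add)

lemma RL_integral_one: "RL_integral 1 f x = integral {0..x} f"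
proof -
  have "integral {0..x} (\<lambda>s. (x - s) powr 0 * f s) = integral {0..x} f"
    by (rule integral_spike[of "{x}"]) auto
  then show ?thesis by (simp add: RL_integral_def)
qed

lemma RL_integral_two:
  "x \<ge> 0 \<Longrightarrow> RL_integral 2 f x = integral {0..x} (\<lambda>s. (x - s) * f s)"
  unfolding RL_integral_def by (auto simp: Gamma_numeral intro!: integral_cong)

lemma RL_integral_powr:
  fixes a b x :: real
  assumes "a > 0" "b > 0" "x \<ge> 0"
  shows "RL_integrable a (\<lambda>s. s powr (b - 1)) x"
    and "RL_integral a (\<lambda>s. s powr (b - 1)) x = Gamma b / Gamma (a + b) * x powr (a + b - 1)"
proof -
  have I: "((\<lambda>s. (x - s) powr (a - 1) * s powr (b - 1)) has_integral Beta a b * x powr (a + b - 1)) {0..x}"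
  proof (cases "x = 0")
    case False
    then show ?thesis
      using has_integral_Beta_shifted[of a b 0 x] assms by simp
  qed auto
  then show "RL_integrable a (\<lambda>s. s powr (b - 1)) x"
    by (auto simp: RL_integrable_def)
  have "Gamma a \<noteq> 0"
    using Gamma_real_pos[OF assms(1)] by simp
  then show "RL_integral a (\<lambda>s. s powr (b - 1)) x = Gamma b / Gamma (a + b) * x powr (a + b - 1)"
    by (simp add: RL_integral_def Beta_def integral_unique[OF I])
qed

lemma RL_integral_RL_integral:
  fixes a b x :: real and g :: "real \<Rightarrow> real"
  assumes a: "a > 0" and b: "b > 0" and g: "continuous_on {0..x} g"
  shows "RL_integrable a (RL_integral b g) x"
    and "RL_integral a (RL_integral b g) x = RL_integral (a + b) g x"
  using iterated_powr_kernel_integral[OF a b g] integrable_on_divide[of _ "{0..x}" "Gamma b"]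
    Gamma_real_pos[OF a] Gamma_real_pos[OF b]
  unfolding RL_integrable_def RL_integral_def
  by (simp_all add: Beta_def)

lemma integral_powr_kernel_unit_step:
  fixes \<beta> \<tau> :: real and f :: "real \<Rightarrow> real"
  assumes \<beta>: "\<beta> > 0" and \<tau>: "\<tau> \<ge> 0" and f: "continuous_on {0..\<tau>+1} f"
  shows "integral {0..\<tau>+1} (\<lambda>r. (\<tau> + 1 - r) powr \<beta> * f r) - integral {0..\<tau>} (\<lambda>r. (\<tau> - r) powr \<beta> * f r)
       = integral {0..1} (\<lambda>r. ((\<tau> + 1 - r) powr \<beta> - \<tau> powr \<beta>) * f r) + \<tau> powr \<beta> * integral {0..1} f
         + integral {0..\<tau>} (\<lambda>r. (\<tau> - r) powr \<beta> * (f (r + 1) - f r))"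
proof -
  define k where "k = (\<lambda>r. (\<tau> + 1 - r) powr \<beta> * f r)"
  have "continuous_on {0..\<tau>+1} k"
    unfolding k_def using \<beta> by (intro continuous_intros continuous_on_powr' f) auto
  then have k_int: "k integrable_on {0..1}" "k integrable_on {0..\<tau>+1}"
    using \<tau> by (auto intro!: integrable_continuous_interval elim!: continuous_on_subset)
  have f_int: "f integrable_on {0..1}"
    using \<tau> by (auto intro!: integrable_continuous_interval continuous_on_subset[OF f])
  have "(\<lambda>r. (\<tau> - r) powr \<beta> * f r) integrable_on {0..\<tau>}"
       "(\<lambda>r. (\<tau> - r) powr \<beta> * f (r + 1)) integrable_on {0..\<tau>}"
    using \<beta> \<tau> by (auto intro!: integrable_continuous_interval continuous_intros continuous_on_powr'
        continuous_on_subset[OF f] continuous_on_compose2[OF f])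
  moreover have "integral {0..\<tau>+1} k = integral {0..1} k + integral {1..\<tau>+1} k"
    using Henstock_Kurzweil_Integration.integral_combine[of 0 1 "\<tau> + 1" k] k_int \<tau> by simp
  moreover have "integral {1..\<tau>+1} k = integral {0..\<tau>} (\<lambda>r. (\<tau> - r) powr \<beta> * f (r + 1))"
    using integral_shift_Icc_real[of 0 \<tau> k 1] by (simp add: k_def o_def add.commute)
  moreover have "integral {0..1} k
      = integral {0..1} (\<lambda>r. ((\<tau> + 1 - r) powr \<beta> - \<tau> powr \<beta>) * f r) + \<tau> powr \<beta> * integral {0..1} f"
    using integral_diff[OF k_int(1) integrable_cmul[OF f_int, of "\<tau> powr \<beta>"]]
    by (simp add: k_def left_diff_distrib)
  ultimately show ?thesis
    by (simp add: k_def right_diff_distrib integral_diff)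
qed

lemma integral_unit_shift_diff:
  fixes t :: real and u :: "real \<Rightarrow> real"
  assumes t: "t \<ge> 0" and u: "continuous_on {0..t+1} u"
  shows "integral {0..t} (\<lambda>r. u (r + 1) - u r) = integral {t..t+1} u - integral {0..1} u"
proof -
  have u_int: "u integrable_on {0..t+1}" "u integrable_on {0..t}" "(\<lambda>r. u (r + 1)) integrable_on {0..t}"
    using t by (auto intro!: integrable_continuous_interval continuous_on_subset[OF u]
        continuous_on_compose2[OF u] continuous_intros)
  have "integral {0..t} (\<lambda>r. u (r + 1)) = integral {1..t+1} u"
    using integral_shift_Icc_real[of 0 t u 1] by (simp add: o_def add.commute)
  moreover have "integral {0..1} u + integral {1..t+1} u = integral {0..t} u + integral {t..t+1} u"
    using Henstock_Kurzweil_Integration.integral_combine[of 0 1 "t + 1" u] Henstock_Kurzweil_Integration.integral_combine[of 0 t "t + 1" u] u_int t by simp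
  ultimately show ?thesis
    using integral_diff[OF u_int(3,2)] by simp
qed

lemma integral_distance_weighted_deriv:
  fixes t :: real and H H' :: "real \<Rightarrow> real"
  assumes t: "t \<ge> 0" and H: "continuous_on {0..t} H" and H': "continuous_on {0..t} H'"
    and deriv: "\<And>r. r \<in> {0<..<t} \<Longrightarrow> (H has_real_derivative H' r) (at r)"
  shows "integral {0..t} (\<lambda>r. (t - r) * H' r) = integral {0..t} H - t * H 0"
proof -
  have "((\<lambda>r. (t - r) * H' r - H r) has_integral (t - t) * H t - (t - 0) * H 0) {0..t}"
  proof (rule fundamental_theorem_of_calculus_interior[OF t])
    show "continuous_on {0..t} (\<lambda>r. (t - r) * H r)"
      using H by (intro continuous_intros)
    fix r assume "r \<in> {0<..<t}"
    then have "((\<lambda>r. (t - r) * H r) has_real_derivative (t - r) * H' r - H r) (at r)"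
      by (auto intro!: derivative_eq_intros deriv)
    then show "((\<lambda>r. (t - r) * H r) has_vector_derivative (t - r) * H' r - H r) (at r)"
      by (simp add: has_real_derivative_iff_has_vector_derivative)
  qed
  from has_integral_add[OF this integrable_integral[OF integrable_continuous_interval[OF H]]]
  show ?thesis
    by (simp add: integral_unique)
qed

lemma continuous_on_integral_powr_difference:
  fixes \<beta> :: real and f :: "real \<Rightarrow> real"
  assumes \<beta>: "\<beta> > 0" and f: "continuous_on {0..1} f"
  shows "continuous_on {0..} (\<lambda>\<tau>. integral {0..1} (\<lambda>r. ((\<tau> + 1 - r) powr \<beta> - \<tau> powr \<beta>) * f r))"
proof -
  have "continuous_on ({0..} \<times> {0..1}) (\<lambda>p. ((fst p + 1 - snd p) powr \<beta> - fst p powr \<beta>) * f (snd p))"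
    using \<beta> by (intro continuous_intros continuous_on_powr' continuous_on_compose2[OF f]) auto
  then have "continuous_on ({0..} \<times> cbox 0 1) (\<lambda>(\<tau>, r). ((\<tau> + 1 - r) powr \<beta> - \<tau> powr \<beta>) * f r)"
    by (simp add: case_prod_unfold)
  from integral_continuous_on_param[OF this] show ?thesis
    by simp
qed

lemma deriv_eq_interior:
  fixes T x :: real and u u' :: "real \<Rightarrow> real"
  assumes "\<And>x. x \<in> {0..T} \<Longrightarrow> (u has_real_derivative u' x) (at x within {0..T})"
    and "x \<in> {0<..<T}"
  shows "deriv u x = u' x"
  using assms(1)[of x] assms(2) at_within_Icc_at[of 0 x T] by (auto intro: DERIV_imp_deriv)

lemma caputo_deriv_eq_RL_integral:
  fixes \<alpha> T s :: real and u u' :: "real \<Rightarrow> real"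
  assumes u': "\<And>x. x \<in> {0..T} \<Longrightarrow> (u has_real_derivative u' x) (at x within {0..T})"
    and s: "s \<in> {0..T}"
  shows "caputo_deriv \<alpha> u s = RL_integral (1 - \<alpha>) u' s"
proof -
  have "integral {0..s} (\<lambda>r. (s - r) powr (- \<alpha>) * deriv u r) = integral {0..s} (\<lambda>r. (s - r) powr (- \<alpha>) * u' r)"
    using s deriv_eq_interior[OF u'] by (intro integral_spike[of "{0, T}"]) auto
  then show ?thesis
    by (simp add: caputo_deriv_def RL_integral_def)
qed

lemma integral_caputo_deriv:
  fixes \<alpha> T y :: real and u u' :: "real \<Rightarrow> real"
  assumes \<alpha>: "\<alpha> < 1"
    and u': "\<And>x. x \<in> {0..T} \<Longrightarrow> (u has_real_derivative u' x) (at x within {0..T})"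
    and cont: "continuous_on {0..T} u'" and y: "y \<in> {0..T}"
  shows "caputo_deriv \<alpha> u integrable_on {0..y}"
    and "integral {0..y} (caputo_deriv \<alpha> u) = RL_integral (2 - \<alpha>) u' y"
proof -
  have caputo: "caputo_deriv \<alpha> u s = RL_integral (1 - \<alpha>) u' s" if "s \<in> {0..y}" for s
    using caputo_deriv_eq_RL_integral[OF u'] that y by simp
  have "continuous_on {0..y} u'"
    using y by (auto intro: continuous_on_subset[OF cont])
  note semigroup = RL_integral_RL_integral[of 1 "1 - \<alpha>", OF _ _ this]
  have "RL_integral (1 - \<alpha>) u' integrable_on {0..y}"
    using semigroup(1) \<alpha> by (simp add: RL_integrable_one_iff)
  then show "caputo_deriv \<alpha> u integrable_on {0..y}"
    using integrable_cong[of "{0..y}" "caputo_deriv \<alpha> u" "RL_integral (1 - \<alpha>) u'"] caputo by blast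
  have "integral {0..y} (caputo_deriv \<alpha> u) = RL_integral 1 (RL_integral (1 - \<alpha>) u') y"
    unfolding RL_integral_one using caputo by (rule integral_cong)
  also have "\<dots> = RL_integral (2 - \<alpha>) u' y"
    using semigroup(2) \<alpha> by simp
  finally show "integral {0..y} (caputo_deriv \<alpha> u) = RL_integral (2 - \<alpha>) u' y" .
qed

lemma integral_caputo_deriv_unit_interval:
  fixes \<alpha> T \<tau> :: real and u u' :: "real \<Rightarrow> real"
  assumes \<alpha>: "0 < \<alpha>" "\<alpha> < 1"
    and u': "\<And>x. x \<in> {0..T} \<Longrightarrow> (u has_real_derivative u' x) (at x within {0..T})"
    and cont: "continuous_on {0..T} u'" and \<tau>: "\<tau> \<ge> 0" "\<tau> + 1 \<le> T"
  shows "integral {\<tau>..\<tau>+1} (caputo_deriv \<alpha> u)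
       = (integral {0..1} (\<lambda>r. ((\<tau> + 1 - r) powr (1 - \<alpha>) - \<tau> powr (1 - \<alpha>)) * u' r)
           + (u 1 - u 0) * \<tau> powr (1 - \<alpha>)) / Gamma (2 - \<alpha>)
         + RL_integral (2 - \<alpha>) (\<lambda>r. u' (r + 1) - u' r) \<tau>"
proof -
  note caputo = integral_caputo_deriv[OF \<alpha>(2) u' cont]
  have "integral {0..\<tau>} (caputo_deriv \<alpha> u) + integral {\<tau>..\<tau>+1} (caputo_deriv \<alpha> u)
      = integral {0..\<tau>+1} (caputo_deriv \<alpha> u)"
    using caputo(1)[of "\<tau> + 1"] \<tau> by (intro Henstock_Kurzweil_Integration.integral_combine) auto
  then have "integral {\<tau>..\<tau>+1} (caputo_deriv \<alpha> u) = RL_integral (2 - \<alpha>) u' (\<tau> + 1) - RL_integral (2 - \<alpha>) u' \<tau>"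
    using caputo(2)[of \<tau>] caputo(2)[of "\<tau> + 1"] \<tau> by simp
  also have "\<dots> = (integral {0..\<tau>+1} (\<lambda>r. (\<tau> + 1 - r) powr (1 - \<alpha>) * u' r)
      - integral {0..\<tau>} (\<lambda>r. (\<tau> - r) powr (1 - \<alpha>) * u' r)) / Gamma (2 - \<alpha>)"
    by (simp add: RL_integral_def diff_divide_distrib)
  also have "\<dots> = (integral {0..1} (\<lambda>r. ((\<tau> + 1 - r) powr (1 - \<alpha>) - \<tau> powr (1 - \<alpha>)) * u' r)
      + \<tau> powr (1 - \<alpha>) * integral {0..1} u'
      + integral {0..\<tau>} (\<lambda>r. (\<tau> - r) powr (1 - \<alpha>) * (u' (r + 1) - u' r))) / Gamma (2 - \<alpha>)"
    using \<alpha> \<tau> by (subst integral_powr_kernel_unit_step) (auto intro: continuous_on_subset[OF cont])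
  also have "integral {0..1} u' = u 1 - u 0"
  proof (rule integral_unique, rule fundamental_theorem_of_calculus)
    fix x :: real assume "x \<in> {0..1}"
    then have "(u has_real_derivative u' x) (at x within {0..1})"
      using \<tau> by (intro DERIV_subset[OF u']) auto
    then show "(u has_vector_derivative u' x) (at x within {0..1})"
      by (simp add: has_real_derivative_iff_has_vector_derivative)
  qed simp
  finally show ?thesis
    by (simp add: RL_integral_def add_divide_distrib mult.commute)
qed

lemma RL_integral_two_unit_shift_deriv:
  fixes T t :: real and u u' :: "real \<Rightarrow> real"
  assumes u': "\<And>x. x \<in> {0..T} \<Longrightarrow> (u has_real_derivative u' x) (at x within {0..T})"
    and cont: "continuous_on {0..T} u'" and t: "t \<ge> 0" "t + 1 \<le> T"
  shows "RL_integral 2 (\<lambda>r. u' (r + 1) - u' r) t = integral {t..t+1} u - integral {0..1} u - t * (u 1 - u 0)"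
proof -
  have u_cont: "continuous_on {0..T} u"
    using u' DERIV_continuous continuous_on_eq_continuous_within by blast
  have "integral {0..t} (\<lambda>r. (t - r) * (u' (r + 1) - u' r))
      = integral {0..t} (\<lambda>r. u (r + 1) - u r) - t * (u (0 + 1) - u 0)"
  proof (rule integral_distance_weighted_deriv[OF t(1)])
    show "continuous_on {0..t} (\<lambda>r. u (r + 1) - u r)" "continuous_on {0..t} (\<lambda>r. u' (r + 1) - u' r)"
      using t by (auto intro!: continuous_intros continuous_on_subset[OF u_cont] continuous_on_subset[OF cont]
          continuous_on_compose2[OF u_cont] continuous_on_compose2[OF cont])
    have "(u has_real_derivative u' x) (at x)" if "x \<in> {0<..<T}" for x
      using u'[of x] that at_within_Icc_at[of 0 x T] by auto
    then show "((\<lambda>r. u (r + 1) - u r) has_real_derivative u' (r + 1) - u' r) (at r)" if "r \<in> {0<..<t}" for r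
      using that t by (auto intro!: derivative_eq_intros simp: DERIV_shift[symmetric])
  qed
  then show ?thesis
    using integral_unit_shift_diff[OF t(1)] t
    by (simp add: RL_integral_two continuous_on_subset[OF u_cont])
qed

lemma RL_integral_caputo_deriv_unit_window:
  fixes \<alpha> T t :: real and u u' :: "real \<Rightarrow> real"
  assumes \<alpha>: "0 < \<alpha>" "\<alpha> < 1"
    and u': "\<And>x. x \<in> {0..T} \<Longrightarrow> (u has_real_derivative u' x) (at x within {0..T})"
    and cont: "continuous_on {0..T} u'" and t: "t \<ge> 0" "t + 1 \<le> T"
  defines "G \<equiv> \<lambda>\<tau>. integral {0..1} (\<lambda>r. ((\<tau> + 1 - r) powr (1 - \<alpha>) - \<tau> powr (1 - \<alpha>)) * u' r)"
  shows "RL_integral \<alpha> (\<lambda>\<tau>. integral {\<tau>..\<tau>+1} (caputo_deriv \<alpha> u)) t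
       = integral {t..t+1} u - integral {0..1} u + (1 / Gamma (2 - \<alpha>)) * RL_integral \<alpha> G t"
proof -
  define h where "h = (\<lambda>r. u' (r + 1) - u' r)"
  define c where "c = (u 1 - u 0) / Gamma (2 - \<alpha>)"
  have "Gamma (2 - \<alpha>) \<noteq> 0"
    using Gamma_real_pos[of "2 - \<alpha>"] \<alpha> by linarith
  have "continuous_on {0..1} u'"
    using t by (auto intro: continuous_on_subset[OF cont])
  then have "continuous_on {0..t} G"
    using continuous_on_integral_powr_difference[of "1 - \<alpha>" u'] \<alpha>
    by (auto simp: G_def elim!: continuous_on_subset)
  then have G_int: "RL_integrable \<alpha> (\<lambda>\<tau>. (1 / Gamma (2 - \<alpha>)) * G \<tau>) t"
    by (intro RL_integrable_cmult RL_integrable_continuous \<alpha>(1))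
  note powr = RL_integral_powr[of \<alpha> "2 - \<alpha>" t]
  have "continuous_on {0..t} h"
    unfolding h_def using t
    by (auto intro!: continuous_intros continuous_on_subset[OF cont] continuous_on_compose2[OF cont])
  note semigroup = RL_integral_RL_integral[of \<alpha> "2 - \<alpha>", OF \<alpha>(1) _ this]
  have "RL_integral \<alpha> (\<lambda>\<tau>. integral {\<tau>..\<tau>+1} (caputo_deriv \<alpha> u)) t
      = RL_integral \<alpha> (\<lambda>\<tau>. (1 / Gamma (2 - \<alpha>)) * G \<tau> + c * \<tau> powr (1 - \<alpha>) + RL_integral (2 - \<alpha>) h \<tau>) t"
    using integral_caputo_deriv_unit_interval[OF \<alpha> u' cont] t
    by (intro RL_integral_cong) (simp add: G_def h_def c_def add_divide_distrib)
  also have "\<dots> = (1 / Gamma (2 - \<alpha>)) * RL_integral \<alpha> G t + c * RL_integral \<alpha> (\<lambda>\<tau>. \<tau> powr (1 - \<alpha>)) t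
      + RL_integral \<alpha> (RL_integral (2 - \<alpha>) h) t"
    using G_int RL_integrable_cmult[OF powr(1)] semigroup(1) \<alpha> t
    by (simp add: RL_integral_add RL_integrable_add RL_integral_cmult RL_integral_divide)
  also have "\<dots> = (1 / Gamma (2 - \<alpha>)) * RL_integral \<alpha> G t + (u 1 - u 0) * t
      + (integral {t..t+1} u - integral {0..1} u - t * (u 1 - u 0))"
    using powr(2) semigroup(2) RL_integral_two_unit_shift_deriv[OF u' cont t] \<alpha> t \<open>Gamma (2 - \<alpha>) \<noteq> 0\<close>
    by (simp add: c_def h_def Gamma_numeral)
  finally show ?thesis
    by simp
qed

theorem lemma3p1:
  fixes \<alpha> T t :: real and u :: "real \<Rightarrow> real"
  assumes "0 < \<alpha>" "\<alpha> < 1" "T > 1" "C1_on 0 T u" "t \<in> {0..T-1}"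
  shows "RL_integral \<alpha> (\<lambda>\<tau>. integral {\<tau>..\<tau>+1} (\<lambda>s. caputo_deriv \<alpha> u s)) t
       = integral {t..t+1} u - integral {0..1} u
         + (1 / Gamma (2 - \<alpha>)) * RL_integral \<alpha>
             (\<lambda>\<tau>. integral {0..1} (\<lambda>r. ((\<tau> + 1 - r) powr (1 - \<alpha>) - \<tau> powr (1 - \<alpha>)) * deriv u r)) t"
proof -
  obtain u' where u': "\<And>x. x \<in> {0..T} \<Longrightarrow> (u has_real_derivative u' x) (at x within {0..T})"
    and cont: "continuous_on {0..T} u'"
    using assms(4) unfolding C1_on_def by blast
  \<comment> \<open>at 0, where u is only one-sidedly differentiable, deriv u may differ from u'\<close>
  have "deriv u r = u' r" if "r \<in> {0..1} - {0}" for r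
    using deriv_eq_interior[OF u'] that assms(3) by simp
  then have "integral {0..1} (\<lambda>r. ((\<tau> + 1 - r) powr (1 - \<alpha>) - \<tau> powr (1 - \<alpha>)) * u' r)
      = integral {0..1} (\<lambda>r. ((\<tau> + 1 - r) powr (1 - \<alpha>) - \<tau> powr (1 - \<alpha>)) * deriv u r)" for \<tau>
    by (intro integral_spike[of "{0}"]) auto
  then show ?thesis
    using RL_integral_caputo_deriv_unit_window[OF assms(1,2) u' cont] assms(5) by simp
qed

end
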